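(* Let $L=\langle S,A,\to\rangle$ be a labelled transition system. For all $x,y\in\{o,b\}$, the relation $\equiv_{E(x,y)}$ is an $(x,y)$-generic bisimulation.
   Context: An LTS is $\langle S,A,\to\rangle$ with states $S$, actions $A$ containing the internal action $\tau$, and $\to\subseteq S\times A\times S$; write $s\xrightarrow{a}t$, and $\twoheadrightarrow$ for the reflexive-transitive closure of $\xrightarrow{\tau}$. For $R\subseteq S\times S$ and $s,s',t$: $s\twoheadrightarrow_{o,R,t}s'$ iff $s\twoheadrightarrow s'$; $s\twoheadrightarrow_{b,R,t}s'$ iff $s\twoheadrightarrow s'$, $t\,R\,s$ and $t\,R\,s'$. For $x,y\in\{o,b\}$, a symmetric $R$ is an $(x,y)$-generic bisimulation if whenever $s\,R\,t$ and $s\xrightarrow{a}s'$, either $a=\tau$ and $s'\,R\,t$, or there exist $t',t_1,t_2$ with $t\twoheadrightarrow_{x,R,s}t_1\xrightarrow{a}t_2\twoheadrightarrow_{y,R,s'}t'$ and $s'\,R\,t'$. Generic bisimulation game. Let $\frown,\smile$ be formal tags and $E\subseteq\{\frown,\smile\}$. Spoiler-owned configurations $\langle (s,t),c,m,r\rangle_S$ and Duplicator-owned $\langle (s,t),c,m,r\rangle_D$ have $(s,t)\in S\times S$, $c\in (A\times S)\cup\{\dagger\}$, $m\in (S\times\{\frown,\smile\})\cup\{\dagger\}$, $r\in\{*,\checkmark\}$. From $\langle (s,t),c,m,r\rangle_S$ Spoiler may: (S1) move to $\langle (s,t),c,m,*\rangle_D$ if $c\neq\dagger$; (S2a) for some $s\xrightarrow{a}s'$,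 move to $\langle (s,t),(a,s'),(t,\frown),*\rangle_D$ if $c=\dagger$; (S2b) for some $s\xrightarrow{a}s'$, move to $\langle (s,t),(a,s'),(t,\frown),\checkmark\rangle_D$ if $c\neq (a,s')$; (S3) for some $t\xrightarrow{a}t'$, move to $\langle (t,s),(a,t'),(s,\frown),\checkmark\rangle_D$. From $\langle (u,v),(a,u'),(\bar v,f),r\rangle_D$ Duplicator may: (D1) move to $\langle (u',\bar v),\dagger,\dagger,\checkmark\rangle_S$ if $a=\tau$; (D2) if $f=\frown$ and $\bar v\xrightarrow{a}v'$: (a) move to $\langle (u',v'),(a,u'),(v',\smile),*\rangle_S$, or (b) move to $\langle (u',v'),\dagger,\dagger,\checkmark\rangle_S$, or (c) only if $\smile\in E$, move to $\langle (u,v),(a,u'),(v',\smile),*\rangle_S$; (D3) for some $\bar v\xrightarrow{\tau}v'$: (a) move to $\langle (u,v'),(a,u'),(v',f),*\rangle_S$, or (b) only if $f=\smile$, move to $\langle (u',v'),\dagger,\dagger,\checkmark\rangle_S$, or (c) only if $f\in E$, move to $\langle (u,v),(a,u'),(v',f),*\rangle_S$. Duplicator wins a finite play if Spoiler gets stuck, and an infinite play if it has infinitely many $\checkmark$ rewards; other plays are won by Spoiler. $s\equiv_E t$ iff Duplicator has a strategy winning all plays from $\langle (s,t),\dagger,\dagger,*\rangle_S$. $E(x,y)$ is the smallest set with $\frown\in E(o,y)$ and $\smile\in E(x,o)$ for all $x,y\in\{o,b\}$. *)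

theory Defs
  imports Main
begin

definition tau_steps :: "('s \<Rightarrow> 'a \<Rightarrow> 's \<Rightarrow> bool) \<Rightarrow> 'a \<Rightarrow> 's \<Rightarrow> 's \<Rightarrow> bool" where
  "tau_steps T tau = (\<lambda>s s'. T s tau s')\<^sup>*\<^sup>*"

datatype mode = Mo | Mb

definition mstep :: "('s \<Rightarrow> 'a \<Rightarrow> 's \<Rightarrow> bool) \<Rightarrow> 'a \<Rightarrow> mode \<Rightarrow> ('s \<Rightarrow> 's \<Rightarrow> bool)
    \<Rightarrow> 's \<Rightarrow> 's \<Rightarrow> 's \<Rightarrow> bool" where
  "mstep T tau x R t s s' =
     (case x of
        Mo \<Rightarrow> tau_steps T tau s s'
      | Mb \<Rightarrow> tau_steps T tau s s' \<and> R t s \<and> R t s')"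

definition generic_bisim :: "('s \<Rightarrow> 'a \<Rightarrow> 's \<Rightarrow> bool) \<Rightarrow> 'a \<Rightarrow> mode \<Rightarrow> mode
    \<Rightarrow> ('s \<Rightarrow> 's \<Rightarrow> bool) \<Rightarrow> bool" where
  "generic_bisim T tau x y R \<longleftrightarrow>
     (\<forall>s t. R s t \<longrightarrow> R t s) \<and>
     (\<forall>s t a s'. R s t \<and> T s a s' \<longrightarrow>
        (a = tau \<and> R s' t) \<or>
        (\<exists>t' t1 t2. mstep T tau x R s t t1 \<and> T t1 a t2 \<and> mstep T tau y R s' t2 t' \<and> R s' t'))"

datatype owner = Spo | Dup
datatype tag = Frown | Smile
datatype reward = Star | Check

text \<open>Conf own (s,t) c m r; c = None stands for dagger, m = None stands for dagger.\<close>
datatype ('s, 'a) conf = Conf owner "'s \<times> 's" "('a \<times> 's) option" "('s \<times> tag) option" reward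

fun owner_of :: "('s, 'a) conf \<Rightarrow> owner" where
  "owner_of (Conf o' p c m r) = o'"

fun reward_of :: "('s, 'a) conf \<Rightarrow> reward" where
  "reward_of (Conf o' p c m r) = r"

inductive gmove :: "('s \<Rightarrow> 'a \<Rightarrow> 's \<Rightarrow> bool) \<Rightarrow> 'a \<Rightarrow> tag set
    \<Rightarrow> ('s, 'a) conf \<Rightarrow> ('s, 'a) conf \<Rightarrow> bool" for T tau E where
  S1: "c \<noteq> None \<Longrightarrow> gmove T tau E (Conf Spo (s, t) c m r) (Conf Dup (s, t) c m Star)"
| S2a: "T s a s' \<Longrightarrow>
    gmove T tau E (Conf Spo (s, t) None m r) (Conf Dup (s, t) (Some (a, s')) (Some (t, Frown)) Star)"
| S2b: "T s a s' \<Longrightarrow> c \<noteq> Some (a, s') \<Longrightarrow>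
    gmove T tau E (Conf Spo (s, t) c m r) (Conf Dup (s, t) (Some (a, s')) (Some (t, Frown)) Check)"
| S3: "T t a t' \<Longrightarrow>
    gmove T tau E (Conf Spo (s, t) c m r) (Conf Dup (t, s) (Some (a, t')) (Some (s, Frown)) Check)"
| D1: "a = tau \<Longrightarrow>
    gmove T tau E (Conf Dup (u, v) (Some (a, u')) (Some (vb, f)) r) (Conf Spo (u', vb) None None Check)"
| D2a: "f = Frown \<Longrightarrow> T vb a v' \<Longrightarrow>
    gmove T tau E (Conf Dup (u, v) (Some (a, u')) (Some (vb, f)) r)
                  (Conf Spo (u', v') (Some (a, u')) (Some (v', Smile)) Star)"
| D2b: "f = Frown \<Longrightarrow> T vb a v' \<Longrightarrow>
    gmove T tau E (Conf Dup (u, v) (Some (a, u')) (Some (vb, f)) r) (Conf Spo (u', v') None None Check)"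
| D2c: "f = Frown \<Longrightarrow> T vb a v' \<Longrightarrow> Smile \<in> E \<Longrightarrow>
    gmove T tau E (Conf Dup (u, v) (Some (a, u')) (Some (vb, f)) r)
                  (Conf Spo (u, v) (Some (a, u')) (Some (v', Smile)) Star)"
| D3a: "T vb tau v' \<Longrightarrow>
    gmove T tau E (Conf Dup (u, v) (Some (a, u')) (Some (vb, f)) r)
                  (Conf Spo (u, v') (Some (a, u')) (Some (v', f)) Star)"
| D3b: "T vb tau v' \<Longrightarrow> f = Smile \<Longrightarrow>
    gmove T tau E (Conf Dup (u, v) (Some (a, u')) (Some (vb, f)) r) (Conf Spo (u', v') None None Check)"
| D3c: "T vb tau v' \<Longrightarrow> f \<in> E \<Longrightarrow>
    gmove T tau E (Conf Dup (u, v) (Some (a, u')) (Some (vb, f)) r)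
                  (Conf Spo (u, v) (Some (a, u')) (Some (v', f)) Star)"

text \<open>Duplicator strategies are history dependent: they map the play so far
  (a nonempty list of configurations, ending in the current one) to the next configuration.\<close>
type_synonym ('s, 'a) dstrategy = "('s, 'a) conf list \<Rightarrow> ('s, 'a) conf"

definition consistent_prefix :: "('s \<Rightarrow> 'a \<Rightarrow> 's \<Rightarrow> bool) \<Rightarrow> 'a \<Rightarrow> tag set
    \<Rightarrow> ('s, 'a) dstrategy \<Rightarrow> ('s, 'a) conf \<Rightarrow> ('s, 'a) conf list \<Rightarrow> bool" where
  "consistent_prefix T tau E \<sigma> c0 ps \<longleftrightarrow>
     ps \<noteq> [] \<and> hd ps = c0 \<and>
     (\<forall>i. Suc i < length ps \<longrightarrow>
        gmove T tau E (ps ! i) (ps ! Suc i) \<and>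
        (owner_of (ps ! i) = Dup \<longrightarrow> ps ! Suc i = \<sigma> (take (Suc i) ps)))"

definition consistent_inf_play :: "('s \<Rightarrow> 'a \<Rightarrow> 's \<Rightarrow> bool) \<Rightarrow> 'a \<Rightarrow> tag set
    \<Rightarrow> ('s, 'a) dstrategy \<Rightarrow> ('s, 'a) conf \<Rightarrow> (nat \<Rightarrow> ('s, 'a) conf) \<Rightarrow> bool" where
  "consistent_inf_play T tau E \<sigma> c0 p \<longleftrightarrow>
     p 0 = c0 \<and>
     (\<forall>i. gmove T tau E (p i) (p (Suc i)) \<and>
        (owner_of (p i) = Dup \<longrightarrow> p (Suc i) = \<sigma> (map p [0..<Suc i])))"

definition dup_winning :: "('s \<Rightarrow> 'a \<Rightarrow> 's \<Rightarrow> bool) \<Rightarrow> 'a \<Rightarrow> tag set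
    \<Rightarrow> ('s, 'a) dstrategy \<Rightarrow> ('s, 'a) conf \<Rightarrow> bool" where
  "dup_winning T tau E \<sigma> c0 \<longleftrightarrow>
     (\<forall>ps. consistent_prefix T tau E \<sigma> c0 ps \<and> owner_of (last ps) = Dup \<and>
           (\<exists>c'. gmove T tau E (last ps) c') \<longrightarrow> gmove T tau E (last ps) (\<sigma> ps)) \<and>
     (\<forall>ps. consistent_prefix T tau E \<sigma> c0 ps \<and> (\<nexists>c'. gmove T tau E (last ps) c')
           \<longrightarrow> owner_of (last ps) = Spo) \<and>
     (\<forall>p. consistent_inf_play T tau E \<sigma> c0 p \<longrightarrow> (\<exists>\<^sub>\<infinity>i. reward_of (p i) = Check))"

definition game_equiv :: "('s \<Rightarrow> 'a \<Rightarrow> 's \<Rightarrow> bool) \<Rightarrow> 'a \<Rightarrow> tag set \<Rightarrow> 's \<Rightarrow> 's \<Rightarrow> bool" where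
  "game_equiv T tau E s t \<longleftrightarrow> (\<exists>\<sigma>. dup_winning T tau E \<sigma> (Conf Spo (s, t) None None Star))"

definition Eset :: "mode \<Rightarrow> mode \<Rightarrow> tag set" where
  "Eset x y = {f. (f = Frown \<and> x = Mo) \<or> (f = Smile \<and> y = Mo)}"

end

theory Submission
  imports Defs "HOL-Library.Infinite_Set"
begin

text \<open>Symmetry holds because Spoiler may switch sides (S3) at any time.  For the transfer
  property let \<open>s \<equiv> t\<close> and \<open>s \<midarrow>a\<rightarrow> s'\<close>, and suppose \<open>t\<close> cannot \<open>(x, y)\<close>-match this step.
  Spoiler challenges with \<open>(a, s')\<close> and from then on only repeats the challenge (S1).  Every
  configuration of the resulting play records a partial answer of Duplicator, a \<open>\<tau>\<close>-path from
  \<open>t\<close> (tag \<open>\<frown>\<close>) or a \<open>\<tau>\<^sup>* a \<tau>\<^sup>*\<close>-path (tag \<open>\<smile>\<close>).  In mode \<open>b\<close> the tag is not in \<open>E\<close>, so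
  Duplicator cannot mark a step without taking it, and the states she passes are therefore
  equivalent to \<open>s\<close> resp. \<open>s'\<close>, as the mode demands.  Every move of Duplicator earning a \<open>\<checkmark>\<close>
  would complete a matching, so the play never earns one and Duplicator loses.\<close>

section \<open>Plays and residual strategies\<close>

lemma all_nat_split: "(\<forall>i. P i) \<longleftrightarrow> P 0 \<and> (\<forall>i. P (Suc i))"
  by (metis not0_implies_Suc)

lemma INFM_Suc_iff: "(\<exists>\<^sub>\<infinity>n. P (Suc n)) \<longleftrightarrow> (\<exists>\<^sub>\<infinity>n. P n)"
proof -
  have "(\<not> (\<exists>\<^sub>\<infinity>n. P (Suc n))) \<longleftrightarrow> (\<not> (\<exists>\<^sub>\<infinity>n. P n))"
    unfolding not_INFM by (rule MOST_Suc_iff)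
  then show ?thesis by blast
qed

context
  fixes T :: "'s \<Rightarrow> 'a \<Rightarrow> 's \<Rightarrow> bool" and tau :: 'a and E :: "tag set"
begin

lemma consistent_prefix_hd: "consistent_prefix T tau E \<sigma> c0 ps \<Longrightarrow> ps = c0 # tl ps"
  unfolding consistent_prefix_def by (cases ps) auto

lemma consistent_prefix_singleton: "consistent_prefix T tau E \<sigma> c0 [c0]"
  unfolding consistent_prefix_def by auto

lemma consistent_prefix_Cons_Cons_iff:
  "consistent_prefix T tau E \<sigma> c0 (c0 # c1 # qs) \<longleftrightarrow>
     gmove T tau E c0 c1 \<and> (owner_of c0 = Dup \<longrightarrow> c1 = \<sigma> [c0]) \<and>
     consistent_prefix T tau E (\<lambda>zs. \<sigma> (c0 # zs)) c1 (c1 # qs)"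
  unfolding consistent_prefix_def
  by (subst all_nat_split) (simp del: take_Suc_Cons, simp)

lemma consistent_inf_play_iff:
  "consistent_inf_play T tau E \<sigma> c0 p \<longleftrightarrow>
     p 0 = c0 \<and> gmove T tau E c0 (p 1) \<and> (owner_of c0 = Dup \<longrightarrow> p 1 = \<sigma> [c0]) \<and>
     consistent_inf_play T tau E (\<lambda>zs. \<sigma> (c0 # zs)) (p 1) (\<lambda>i. p (Suc i))"
  unfolding consistent_inf_play_def
  by (subst all_nat_split) (auto simp only: map_upt_Suc, auto)

lemma dup_winning_cong:
  assumes "dup_winning T tau E \<sigma> c" and "\<And>zs. zs \<noteq> [] \<Longrightarrow> hd zs = c \<Longrightarrow> \<sigma>' zs = \<sigma> zs"
  shows "dup_winning T tau E \<sigma>' c"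
proof -
  have prefix: "consistent_prefix T tau E \<sigma>' c ps \<longleftrightarrow> consistent_prefix T tau E \<sigma> c ps" for ps
    unfolding consistent_prefix_def using assms(2)
    by (metis (no_types, lifting) Suc_lessD hd_take take_eq_Nil2 zero_less_Suc nat.simps(3)
        less_nat_zero_code)
  have inf_play: "consistent_inf_play T tau E \<sigma>' c p \<longleftrightarrow> consistent_inf_play T tau E \<sigma> c p" for p
  proof -
    have "p 0 = c \<Longrightarrow> \<sigma>' (map p [0..<Suc i]) = \<sigma> (map p [0..<Suc i])" for i
      using assms(2)[of "map p [0..<Suc i]"] by (simp only: map_upt_Suc) simp
    then show ?thesis unfolding consistent_inf_play_def by metis
  qed
  have "consistent_prefix T tau E \<sigma> c ps \<Longrightarrow> \<sigma>' ps = \<sigma> ps" for ps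
    using assms(2) unfolding consistent_prefix_def by auto
  then show ?thesis using assms(1) unfolding dup_winning_def prefix inf_play by metis
qed

lemma dup_winning_after_move:
  assumes win: "dup_winning T tau E \<sigma> c0" and move: "gmove T tau E c0 c1"
    and chosen: "owner_of c0 = Dup \<longrightarrow> c1 = \<sigma> [c0]"
  shows "dup_winning T tau E (\<lambda>zs. \<sigma> (c0 # zs)) c1"
proof -
  have extend: "consistent_prefix T tau E \<sigma> c0 (c0 # ps) \<and> last (c0 # ps) = last ps"
    if "consistent_prefix T tau E (\<lambda>zs. \<sigma> (c0 # zs)) c1 ps" for ps
  proof -
    have "ps = c1 # tl ps" using consistent_prefix_hd[OF that] .
    then show ?thesis using that move chosen consistent_prefix_Cons_Cons_iff[of \<sigma> c0 c1 "tl ps"]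
      by (metis last_ConsR list.discI)
  qed
  show ?thesis
    unfolding dup_winning_def
  proof (intro conjI allI impI)
    fix ps assume "consistent_prefix T tau E (\<lambda>zs. \<sigma> (c0 # zs)) c1 ps \<and>
        owner_of (last ps) = Dup \<and> (\<exists>c'. gmove T tau E (last ps) c')"
    then show "gmove T tau E (last ps) (\<sigma> (c0 # ps))"
      using extend win[unfolded dup_winning_def, THEN conjunct1, rule_format, of "c0 # ps"] by simp
  next
    fix ps assume "consistent_prefix T tau E (\<lambda>zs. \<sigma> (c0 # zs)) c1 ps \<and>
        (\<nexists>c'. gmove T tau E (last ps) c')"
    then show "owner_of (last ps) = Spo"
      using extend win[unfolded dup_winning_def, THEN conjunct2, THEN conjunct1, rule_format, of "c0 # ps"]
      by simp
  next
    fix p assume "consistent_inf_play T tau E (\<lambda>zs. \<sigma> (c0 # zs)) c1 p"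
    then have "consistent_inf_play T tau E \<sigma> c0 (case_nat c0 p)"
      using move chosen unfolding consistent_inf_play_iff[of \<sigma> c0]
      by (simp add: consistent_inf_play_def)
    then have "\<exists>\<^sub>\<infinity>i. reward_of (case_nat c0 p i) = Check"
      using win[unfolded dup_winning_def, THEN conjunct2, THEN conjunct2] by blast
    then show "\<exists>\<^sub>\<infinity>i. reward_of (p i) = Check"
      using INFM_Suc_iff[of "\<lambda>i. reward_of (case_nat c0 p i) = Check"] by simp
  qed
qed

lemma dup_winning_by_moves:
  assumes after: "\<And>c1. gmove T tau E c0 c1 \<Longrightarrow> (owner_of c0 = Dup \<longrightarrow> c1 = \<sigma> [c0]) \<Longrightarrow>
      dup_winning T tau E (\<lambda>zs. \<sigma> (c0 # zs)) c1"
    and dup_legal: "owner_of c0 = Dup \<Longrightarrow> gmove T tau E c0 (\<sigma> [c0])"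
  shows "dup_winning T tau E \<sigma> c0"
proof -
  have residual: "dup_winning T tau E (\<lambda>zs. \<sigma> (c0 # zs)) c1 \<and>
      consistent_prefix T tau E (\<lambda>zs. \<sigma> (c0 # zs)) c1 (c1 # qs)"
    if "consistent_prefix T tau E \<sigma> c0 (c0 # c1 # qs)" for c1 qs
    using that after unfolding consistent_prefix_Cons_Cons_iff by blast
  have prefix_cases: "ps = [c0] \<or> (\<exists>c1 qs. ps = c0 # c1 # qs \<and> last ps = last (c1 # qs))"
    if "consistent_prefix T tau E \<sigma> c0 ps" for ps
    using consistent_prefix_hd[OF that] by (metis last_ConsR list.exhaust list.discI)
  show ?thesis
    unfolding dup_winning_def
  proof (intro conjI allI impI)
    fix ps assume ps: "consistent_prefix T tau E \<sigma> c0 ps \<and>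
        owner_of (last ps) = Dup \<and> (\<exists>c'. gmove T tau E (last ps) c')"
    from prefix_cases[OF ps[THEN conjunct1]]
    show "gmove T tau E (last ps) (\<sigma> ps)"
    proof (elim disjE exE conjE)
      fix c1 qs assume split: "ps = c0 # c1 # qs" "last ps = last (c1 # qs)"
      with ps residual have win1: "dup_winning T tau E (\<lambda>zs. \<sigma> (c0 # zs)) c1"
        and "consistent_prefix T tau E (\<lambda>zs. \<sigma> (c0 # zs)) c1 (c1 # qs)" by auto
      moreover have "owner_of (last (c1 # qs)) = Dup \<and> (\<exists>c'. gmove T tau E (last (c1 # qs)) c')"
        using ps unfolding split(2) by blast
      ultimately have "gmove T tau E (last (c1 # qs)) (\<sigma> (c0 # c1 # qs))"
        using win1[unfolded dup_winning_def, THEN conjunct1, rule_format, of "c1 # qs"] by blast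
      then show ?thesis unfolding split(2) by (simp only: split(1))
    qed (use ps dup_legal in simp)
  next
    fix ps assume ps: "consistent_prefix T tau E \<sigma> c0 ps \<and> (\<nexists>c'. gmove T tau E (last ps) c')"
    from prefix_cases[OF ps[THEN conjunct1]]
    show "owner_of (last ps) = Spo"
    proof (elim disjE exE conjE)
      fix c1 qs assume split: "ps = c0 # c1 # qs" "last ps = last (c1 # qs)"
      with ps residual have win1: "dup_winning T tau E (\<lambda>zs. \<sigma> (c0 # zs)) c1"
        and "consistent_prefix T tau E (\<lambda>zs. \<sigma> (c0 # zs)) c1 (c1 # qs)" by auto
      moreover have "\<nexists>c'. gmove T tau E (last (c1 # qs)) c'" using ps unfolding split(2) by blast
      ultimately have "owner_of (last (c1 # qs)) = Spo"
        using win1[unfolded dup_winning_def, THEN conjunct2, THEN conjunct1, rule_format, of "c1 # qs"]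
        by blast
      then show ?thesis unfolding split(2) .
    qed (use ps dup_legal in \<open>cases "owner_of c0"; auto\<close>)
  next
    fix p assume "consistent_inf_play T tau E \<sigma> c0 p"
    then have "gmove T tau E c0 (p 1)" "owner_of c0 = Dup \<longrightarrow> p 1 = \<sigma> [c0]"
      and "consistent_inf_play T tau E (\<lambda>zs. \<sigma> (c0 # zs)) (p 1) (\<lambda>i. p (Suc i))"
      unfolding consistent_inf_play_iff[of \<sigma> c0 p] by blast+
    then have "\<exists>\<^sub>\<infinity>i. reward_of (p (Suc i)) = Check"
      using after[unfolded dup_winning_def, THEN conjunct2, THEN conjunct2] by blast
    then show "\<exists>\<^sub>\<infinity>i. reward_of (p i) = Check"
      using INFM_Suc_iff[of "\<lambda>i. reward_of (p i) = Check"] by simp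
  qed
qed

lemma dup_winning_Dup_move:
  assumes win: "dup_winning T tau E \<sigma> c" and dup: "owner_of c = Dup"
  shows "gmove T tau E c (\<sigma> [c])"
proof -
  have "\<exists>c'. gmove T tau E c c'"
    using win[unfolded dup_winning_def, THEN conjunct2, THEN conjunct1, rule_format, of "[c]"] dup
    by (auto simp: consistent_prefix_singleton)
  then show ?thesis
    using win[unfolded dup_winning_def, THEN conjunct1, rule_format, of "[c]"] dup
    by (simp add: consistent_prefix_singleton)
qed

text \<open>The invariant carries the residual strategy, so that iterating \<open>step\<close> builds a play
  consistent with \<open>\<sigma>0\<close>.\<close>
lemma not_dup_winning_if_star_forever:
  assumes step: "\<And>\<sigma> c. I \<sigma> c \<Longrightarrow> \<exists>c'. gmove T tau E c c' \<and> (owner_of c = Dup \<longrightarrow> c' = \<sigma> [c]) \<and>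
        reward_of c' = Star \<and> I (\<lambda>zs. \<sigma> (c # zs)) c'"
    and start: "I \<sigma>0 c0" "reward_of c0 = Star"
  shows "\<not> dup_winning T tau E \<sigma>0 c0"
proof
  assume win: "dup_winning T tau E \<sigma>0 c0"
  define next_move where "next_move \<sigma> c c' \<longleftrightarrow> gmove T tau E c c' \<and>
      (owner_of c = Dup \<longrightarrow> c' = \<sigma> [c]) \<and> reward_of c' = Star \<and> I (\<lambda>zs. \<sigma> (c # zs)) c'"
    for \<sigma> c c'
  define advance where "advance = (\<lambda>(\<sigma>, c). (\<lambda>zs. \<sigma> (c # zs), SOME c'. next_move \<sigma> c c'))"
  define state where "state n = (advance ^^ n) (\<sigma>0, c0)" for n
  define p where "p n = snd (state n)" for n
  have advance: "fst (advance (\<sigma>, c)) = (\<lambda>zs. \<sigma> (c # zs)) \<and> next_move \<sigma> c (snd (advance (\<sigma>, c)))"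
    if "I \<sigma> c" for \<sigma> c
    unfolding advance_def using someI_ex[OF step[OF that, folded next_move_def]] by simp
  have invariant: "I (fst (state n)) (p n)" for n
  proof (induction n)
    case 0
    then show ?case using start by (simp add: state_def p_def)
  next
    case (Suc n)
    then show ?case
      using advance[of "fst (state n)" "p n"] unfolding next_move_def p_def state_def
      by (cases "state n") auto
  qed
  have state_Suc: "state (Suc n) = (\<lambda>zs. fst (state n) (p n # zs), p (Suc n))
      \<and> next_move (fst (state n)) (p n) (p (Suc n))" for n
    using advance[OF invariant[of n]] unfolding p_def state_def by (simp add: prod_eq_iff)
  have strategy: "fst (state n) = (\<lambda>zs. \<sigma>0 (map p [0..<n] @ zs))" for n
  proof (induction n)
    case (Suc n)
    then show ?case using state_Suc[of n] by simp
  qed (simp add: state_def)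
  have "consistent_inf_play T tau E \<sigma>0 c0 p"
    unfolding consistent_inf_play_def
    using state_Suc strategy by (simp add: p_def state_def next_move_def)
  then have "\<exists>\<^sub>\<infinity>n. reward_of (p n) = Check"
    by (rule win[unfolded dup_winning_def, THEN conjunct2, THEN conjunct2, rule_format])
  then obtain n where "reward_of (p n) = Check" by (rule INFM_E)
  moreover have "reward_of (p n) = Star"
    using start(2) state_Suc[of "n - 1"] by (cases n) (simp_all add: p_def state_def next_move_def)
  ultimately show False by simp
qed

section \<open>The winning region\<close>

definition dup_wins :: "('s, 'a) conf \<Rightarrow> bool" where
  "dup_wins c \<longleftrightarrow> (\<exists>\<sigma>. dup_winning T tau E \<sigma> c)"

lemma game_equiv_iff_dup_wins:
  "game_equiv T tau E u v \<longleftrightarrow> dup_wins (Conf Spo (u, v) None None Star)"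
  by (simp add: game_equiv_def dup_wins_def)

lemma dup_wins_Spo_move:
  "dup_wins c \<Longrightarrow> owner_of c = Spo \<Longrightarrow> gmove T tau E c c' \<Longrightarrow> dup_wins c'"
  unfolding dup_wins_def using dup_winning_after_move by fastforce

lemma dup_wins_Dup_move:
  "dup_wins c \<Longrightarrow> owner_of c = Dup \<Longrightarrow> \<exists>c'. gmove T tau E c c' \<and> dup_wins c'"
  unfolding dup_wins_def using dup_winning_Dup_move dup_winning_after_move by blast

text \<open>Winning strategies for the successors are glued together with Hilbert choice.\<close>
lemma dup_wins_SpoI:
  assumes "owner_of c = Spo" and "\<And>c'. gmove T tau E c c' \<Longrightarrow> dup_wins c'"
  shows "dup_wins c"
proof -
  define \<sigma> where "\<sigma> zs = (SOME \<sigma>'. dup_winning T tau E \<sigma>' (hd (tl zs))) (tl zs)" for zs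
  have "dup_winning T tau E \<sigma> c"
  proof (rule dup_winning_by_moves)
    fix c1 assume "gmove T tau E c c1"
    then obtain \<sigma>1 where "dup_winning T tau E \<sigma>1 c1" using assms(2) dup_wins_def by blast
    then have "dup_winning T tau E (SOME \<sigma>'. dup_winning T tau E \<sigma>' c1) c1"
      by (rule someI[where P = "\<lambda>\<sigma>'. dup_winning T tau E \<sigma>' c1"])
    then show "dup_winning T tau E (\<lambda>zs. \<sigma> (c # zs)) c1"
      by (rule dup_winning_cong) (simp add: \<sigma>_def)
  qed (use assms(1) in simp)
  then show ?thesis unfolding dup_wins_def by blast
qed

lemma dup_wins_DupI:
  assumes "owner_of c = Dup" and "gmove T tau E c c1" and "dup_wins c1"
  shows "dup_wins c"
proof -
  obtain \<sigma>1 where win1: "dup_winning T tau E \<sigma>1 c1" using assms(3) dup_wins_def by blast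
  define \<sigma> where "\<sigma> zs = (if tl zs = [] then c1 else \<sigma>1 (tl zs))" for zs
  have "dup_winning T tau E \<sigma> c"
  proof (rule dup_winning_by_moves)
    fix c2 assume "owner_of c = Dup \<longrightarrow> c2 = \<sigma> [c]"
    then have "c2 = c1" using assms(1) by (simp add: \<sigma>_def)
    show "dup_winning T tau E (\<lambda>zs. \<sigma> (c # zs)) c2"
      unfolding \<open>c2 = c1\<close> by (rule dup_winning_cong[OF win1]) (simp add: \<sigma>_def)
  qed (use assms in \<open>simp add: \<sigma>_def\<close>)
  then show ?thesis unfolding dup_wins_def by blast
qed

lemma gmove_reward_irrelevant:
  "gmove T tau E (Conf o' p c m r) c' \<Longrightarrow> gmove T tau E (Conf o' p c m r') c'"
  by (erule gmove.cases) (auto intro: gmove.intros)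

lemma dup_wins_reward_irrelevant:
  "dup_wins (Conf o' p c m r) \<longleftrightarrow> dup_wins (Conf o' p c m r')"
proof -
  have "dup_wins (Conf o' p c m r')" if win: "dup_wins (Conf o' p c m r)" for r r'
  proof (cases o')
    case Spo
    show ?thesis
    proof (rule dup_wins_SpoI)
      fix c' assume "gmove T tau E (Conf o' p c m r') c'"
      then show "dup_wins c'"
        using win Spo dup_wins_Spo_move gmove_reward_irrelevant[of o' p c m r'] by auto
    qed (use Spo in simp)
  next
    case Dup
    then obtain c' where move: "gmove T tau E (Conf o' p c m r) c'" and "dup_wins c'"
      using win dup_wins_Dup_move by fastforce
    show ?thesis
    proof (rule dup_wins_DupI)
      show "gmove T tau E (Conf o' p c m r') c'" using move by (rule gmove_reward_irrelevant)
    qed (use Dup \<open>dup_wins c'\<close> in simp_all)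
  qed
  then show ?thesis by blast
qed

lemma game_equiv_iff_dup_wins_Check:
  "game_equiv T tau E u v \<longleftrightarrow> dup_wins (Conf Spo (u, v) None None Check)"
  using game_equiv_iff_dup_wins dup_wins_reward_irrelevant by blast

lemma not_dup_wins_if_trapped:
  assumes spo: "\<And>c. P c \<Longrightarrow> owner_of c = Spo \<Longrightarrow> dup_wins c \<Longrightarrow> \<exists>c'. gmove T tau E c c' \<and> P c'"
    and dup: "\<And>c c'. P c \<Longrightarrow> owner_of c = Dup \<Longrightarrow> gmove T tau E c c' \<Longrightarrow> dup_wins c' \<Longrightarrow> P c'"
    and star: "\<And>c. P c \<Longrightarrow> reward_of c = Star"
    and "P c"
  shows "\<not> dup_wins c"
proof
  assume "dup_wins c"
  then obtain \<sigma>0 where win: "dup_winning T tau E \<sigma>0 c" unfolding dup_wins_def by blast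
  have step: "\<exists>c'. gmove T tau E c c' \<and> (owner_of c = Dup \<longrightarrow> c' = \<sigma> [c]) \<and>
      reward_of c' = Star \<and> dup_winning T tau E (\<lambda>zs. \<sigma> (c # zs)) c' \<and> P c'"
    if inv: "dup_winning T tau E \<sigma> c \<and> P c" for \<sigma> c
  proof -
    obtain c' where "gmove T tau E c c'" and "owner_of c = Dup \<longrightarrow> c' = \<sigma> [c]" and "P c'"
    proof (cases "owner_of c")
      case Spo
      then show ?thesis using inv spo[of c] that unfolding dup_wins_def by auto
    next
      case Dup
      have "gmove T tau E c (\<sigma> [c])" using inv Dup by (blast intro: dup_winning_Dup_move)
      moreover have "dup_wins (\<sigma> [c])"
        using inv calculation unfolding dup_wins_def by (blast intro: dup_winning_after_move)
      ultimately show ?thesis using inv Dup dup that by blast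
    qed
    then show ?thesis using inv star dup_winning_after_move by blast
  qed
  have "\<not> dup_winning T tau E \<sigma>0 c"
    using step by (rule not_dup_winning_if_star_forever) (use win assms in auto)
  then show False using win by contradiction
qed

section \<open>Challenges\<close>

lemma gmove_SpoD:
  assumes "gmove T tau E (Conf Spo (s, t) c m r) c'"
  shows "(c \<noteq> None \<and> c' = Conf Dup (s, t) c m Star) \<or>
    (\<exists>a s'. T s a s' \<and> ((c = None \<and> c' = Conf Dup (s, t) (Some (a, s')) (Some (t, Frown)) Star) \<or>
        (c \<noteq> Some (a, s') \<and> c' = Conf Dup (s, t) (Some (a, s')) (Some (t, Frown)) Check))) \<or>
    (\<exists>a t'. T t a t' \<and> c' = Conf Dup (t, s) (Some (a, t')) (Some (s, Frown)) Check)"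
  using assms by (cases rule: gmove.cases) auto

lemma gmove_DupD:
  assumes "gmove T tau E (Conf Dup (u, v) (Some (a, u')) (Some (w, f)) r) c'"
  shows "(a = tau \<and> c' = Conf Spo (u', w) None None Check) \<or>
    (\<exists>v'. f = Frown \<and> T w a v' \<and> (c' = Conf Spo (u', v') (Some (a, u')) (Some (v', Smile)) Star \<or>
        c' = Conf Spo (u', v') None None Check \<or>
        (Smile \<in> E \<and> c' = Conf Spo (u, v) (Some (a, u')) (Some (v', Smile)) Star))) \<or>
    (\<exists>v'. T w tau v' \<and> (c' = Conf Spo (u, v') (Some (a, u')) (Some (v', f)) Star \<or>
        (f = Smile \<and> c' = Conf Spo (u', v') None None Check) \<or>
        (f \<in> E \<and> c' = Conf Spo (u, v) (Some (a, u')) (Some (v', f)) Star)))"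
  using assms by (cases rule: gmove.cases) auto

lemma dup_wins_repeated_challenge:
  "dup_wins (Conf Spo (s, t) (Some ch) m r) \<Longrightarrow> dup_wins (Conf Dup (s, t) (Some ch) m r')"
  using dup_wins_Spo_move[OF _ _ S1] dup_wins_reward_irrelevant by fastforce

lemma dup_wins_new_challenge:
  "dup_wins (Conf Spo (s, t) c m r) \<Longrightarrow> T s a s' \<Longrightarrow> c \<noteq> Some (a, s') \<Longrightarrow>
    dup_wins (Conf Dup (s, t) (Some (a, s')) (Some (t, Frown)) r')"
  using dup_wins_Spo_move[OF _ _ S2b] dup_wins_reward_irrelevant by fastforce

lemma dup_wins_swapped_challenge:
  "dup_wins (Conf Spo (s, t) c m r) \<Longrightarrow> T t a t' \<Longrightarrow>
    dup_wins (Conf Dup (t, s) (Some (a, t')) (Some (s, Frown)) r')"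
  using dup_wins_Spo_move[OF _ _ S3] dup_wins_reward_irrelevant by fastforce

lemma game_equiv_sym: "game_equiv T tau E s t \<Longrightarrow> game_equiv T tau E t s"
  unfolding game_equiv_iff_dup_wins
proof (rule dup_wins_SpoI)
  fix c' assume win: "dup_wins (Conf Spo (s, t) None None Star)"
    and "gmove T tau E (Conf Spo (t, s) None None Star) c'"
  with gmove_SpoD show "dup_wins c'"
    by (blast intro: dup_wins_new_challenge[OF win] dup_wins_swapped_challenge[OF win])
qed simp

lemma dup_wins_challenge_iff:
  assumes "T u a u'"
  shows "dup_wins (Conf Spo (u, w) (Some (a, u')) (Some (w, Frown)) Star) \<longleftrightarrow>
    game_equiv T tau E u w"
  unfolding game_equiv_iff_dup_wins
proof
  assume win: "dup_wins (Conf Spo (u, w) (Some (a, u')) (Some (w, Frown)) Star)"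
  have challenge: "dup_wins (Conf Dup (u, w) (Some (b, u'')) (Some (w, Frown)) r)"
    if "T u b u''" for b u'' r
    using that dup_wins_repeated_challenge[OF win] dup_wins_new_challenge[OF win]
    by (cases "(b, u'') = (a, u')") auto
  show "dup_wins (Conf Spo (u, w) None None Star)"
  proof (rule dup_wins_SpoI)
    fix c' assume "gmove T tau E (Conf Spo (u, w) None None Star) c'"
    with gmove_SpoD show "dup_wins c'"
      by (blast intro: challenge dup_wins_swapped_challenge[OF win])
  qed simp
next
  assume win: "dup_wins (Conf Spo (u, w) None None Star)"
  show "dup_wins (Conf Spo (u, w) (Some (a, u')) (Some (w, Frown)) Star)"
  proof (rule dup_wins_SpoI)
    fix c' assume "gmove T tau E (Conf Spo (u, w) (Some (a, u')) (Some (w, Frown)) Star) c'"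
    with gmove_SpoD assms show "dup_wins c'"
      by (blast intro: dup_wins_new_challenge[OF win] dup_wins_swapped_challenge[OF win])
  qed simp
qed

text \<open>The hypothesis concerns the configuration left when Duplicator answered the challenge
  \<open>(a, u)\<close> by D2a.  Spoiler may still open any other challenge from it, so a \<open>\<tau>\<close>-step of the
  right-hand side to an equivalent state can be prefixed to Duplicator's answers.\<close>
lemma game_equiv_before_tau_if_answered:
  assumes answered: "dup_wins (Conf Spo (u, v) (Some (a, u)) (Some (v, Smile)) Star)"
    and tau_step: "T v tau v'" and equiv: "game_equiv T tau E u v'"
  shows "game_equiv T tau E u v"
  unfolding game_equiv_iff_dup_wins
proof (rule dup_wins_SpoI)
  have challenge: "dup_wins (Conf Dup (u, v) (Some (b, u'')) (Some (v, Frown)) r)"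
    if step: "T u b u''" for b u'' r
  proof (cases "(b, u'') = (a, u)")
    case True
    have "gmove T tau E (Conf Dup (u, v) (Some (a, u)) (Some (v, Frown)) r)
        (Conf Spo (u, v') (Some (a, u)) (Some (v', Frown)) Star)"
      using tau_step by (rule D3a)
    moreover have "dup_wins (Conf Spo (u, v') (Some (a, u)) (Some (v', Frown)) Star)"
      using dup_wins_challenge_iff step equiv True by simp
    ultimately show ?thesis using True by (auto intro: dup_wins_DupI)
  next
    case False
    then have "Some (a, u) \<noteq> Some (b, u'')" by auto
    then show ?thesis using dup_wins_new_challenge[OF answered step] by blast
  qed
  fix c' assume "gmove T tau E (Conf Spo (u, v) None None Star) c'"
  with gmove_SpoD show "dup_wins c'"
    by (blast intro: challenge dup_wins_swapped_challenge[OF answered])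
qed simp

text \<open>Without D2c (i.e.\ \<open>\<smile> \<notin> E\<close>), if Spoiler insists on an answered challenge, Duplicator
  can only take \<open>\<tau>\<close>-steps on the right keeping the reward \<open>*\<close>, so she must eventually leave via
  D1 or D3b; by the previous lemma, equivalence then propagates back along these steps.\<close>
lemma game_equiv_if_answered:
  assumes no_smile: "Smile \<notin> E"
    and answered: "dup_wins (Conf Spo (u, v0) (Some (a, u)) (Some (v0, Smile)) Star)"
  shows "game_equiv T tau E u v0"
proof (rule ccontr)
  define insisting where "insisting o' v = Conf o' (u, v) (Some (a, u)) (Some (v, Smile)) Star"
    for o' v
  define trap where "trap c \<longleftrightarrow> (\<exists>v. \<not> game_equiv T tau E u v \<and>
      (c = insisting Spo v \<or> c = insisting Dup v \<and> dup_wins (insisting Spo v)))" for c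
  assume "\<not> game_equiv T tau E u v0"
  then have "\<not> dup_wins (insisting Spo v0)"
  proof (intro not_dup_wins_if_trapped[where P = trap])
    fix c assume "trap c" "owner_of c = Spo" "dup_wins c"
    then obtain v where "\<not> game_equiv T tau E u v" "c = insisting Spo v" "dup_wins c"
      unfolding trap_def insisting_def by auto
    moreover have "gmove T tau E (insisting Spo v) (insisting Dup v)"
      unfolding insisting_def by (rule S1) simp
    ultimately show "\<exists>c'. gmove T tau E c c' \<and> trap c'" unfolding trap_def by blast
  next
    fix c c' assume "trap c" "owner_of c = Dup" and move: "gmove T tau E c c'" and "dup_wins c'"
    then obtain v where inequiv: "\<not> game_equiv T tau E u v" and c: "c = insisting Dup v"
      and win: "dup_wins (insisting Spo v)"
      unfolding trap_def insisting_def by auto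
    from gmove_DupD[OF move[unfolded c insisting_def]] no_smile consider
        (stay) "a = tau" "c' = Conf Spo (u, v) None None Check"
      | (step) v' where "T v tau v'" "c' = insisting Spo v'"
      | (leave) v' where "T v tau v'" "c' = Conf Spo (u, v') None None Check"
      unfolding insisting_def by auto
    then show "trap c'"
    proof cases
      case stay
      then show ?thesis using \<open>dup_wins c'\<close> inequiv game_equiv_iff_dup_wins_Check by simp
    next
      case step
      then show ?thesis
        using \<open>dup_wins c'\<close> inequiv game_equiv_before_tau_if_answered win
        unfolding trap_def insisting_def by blast
    next
      case leave
      then show ?thesis
        using \<open>dup_wins c'\<close> inequiv game_equiv_before_tau_if_answered win
          game_equiv_iff_dup_wins_Check
        unfolding insisting_def by blast
    qed
  qed (auto simp: trap_def insisting_def)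
  then show False using answered unfolding insisting_def by simp
qed

section \<open>Matching a step of an equivalent pair\<close>

lemma mstep_iff:
  "mstep T tau z R u v w \<longleftrightarrow> tau_steps T tau v w \<and> (z = Mb \<longrightarrow> R u v \<and> R u w)"
  by (cases z) (simp_all add: mstep_def)

definition can_match :: "mode \<Rightarrow> mode \<Rightarrow> 's \<Rightarrow> 's \<Rightarrow> 'a \<Rightarrow> 's \<Rightarrow> bool" where
  "can_match x y s t a s' \<longleftrightarrow> (a = tau \<and> game_equiv T tau E s' t) \<or>
     (\<exists>t' t1 t2. mstep T tau x (game_equiv T tau E) s t t1 \<and> T t1 a t2 \<and>
        mstep T tau y (game_equiv T tau E) s' t2 t' \<and> game_equiv T tau E s' t')"

lemma can_matchI:
  assumes "game_equiv T tau E s t" and "tau_steps T tau t t1" and "x = Mb \<longrightarrow> game_equiv T tau E s t1"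
    and "T t1 a t2" and "y = Mb \<longrightarrow> game_equiv T tau E s' t2"
    and "tau_steps T tau t2 t'" and "game_equiv T tau E s' t'"
  shows "can_match x y s t a s'"
  unfolding can_match_def mstep_iff using assms
  by (intro disjI2 exI[of _ t'] exI[of _ t1] exI[of _ t2]) simp

context
  fixes x y :: mode and s t s' :: 's and a :: 'a
  assumes Frown_in_E: "Frown \<in> E \<longleftrightarrow> x = Mo"
    and Smile_in_E: "Smile \<in> E \<longleftrightarrow> y = Mo"
    and equiv: "game_equiv T tau E s t"
    and step: "T s a s'"
    and no_match: "\<not> can_match x y s t a s'"
begin

definition frown_reached :: "'s \<Rightarrow> bool" where
  "frown_reached w \<longleftrightarrow>
     (\<lambda>u v. T u tau v \<and> (x = Mb \<longrightarrow> game_equiv T tau E s u))\<^sup>*\<^sup>* t w \<and>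
     (x = Mb \<longrightarrow> game_equiv T tau E s w)"

definition smile_reached :: "'s \<Rightarrow> bool" where
  "smile_reached w \<longleftrightarrow> (\<exists>t1 t2. tau_steps T tau t t1 \<and> (x = Mb \<longrightarrow> game_equiv T tau E s t1) \<and>
     T t1 a t2 \<and> (y = Mb \<longrightarrow> game_equiv T tau E s' t2) \<and> tau_steps T tau t2 w)"

definition pending :: "('s, 'a) conf \<Rightarrow> bool" where
  "pending c \<longleftrightarrow>
     (\<exists>o' v w. c = Conf o' (s, v) (Some (a, s')) (Some (w, Frown)) Star \<and> frown_reached w) \<or>
     (\<exists>o' u v w. c = Conf o' (u, v) (Some (a, s')) (Some (w, Smile)) Star \<and> smile_reached w)"

lemma frown_reached_start: "frown_reached t"
  unfolding frown_reached_def using equiv by simp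

lemma frown_reached_tau:
  "frown_reached w \<Longrightarrow> T w tau v \<Longrightarrow> (x = Mb \<longrightarrow> game_equiv T tau E s v) \<Longrightarrow> frown_reached v"
  unfolding frown_reached_def by (auto intro: rtranclp.rtrancl_into_rtrancl)

lemma smile_reached_from_frown:
  assumes reached: "frown_reached w" and "T w a v" and "y = Mb \<longrightarrow> game_equiv T tau E s' v"
  shows "smile_reached v"
proof -
  have "(\<lambda>u v. T u tau v \<and> (x = Mb \<longrightarrow> game_equiv T tau E s u))\<^sup>*\<^sup>* t w"
    using reached unfolding frown_reached_def by simp
  then have "tau_steps T tau t w"
    unfolding tau_steps_def by (rule rtranclp_mono[THEN predicate2D, rotated]) auto
  then show ?thesis
    unfolding smile_reached_def
    by (intro exI[of _ w] exI[of _ v]) (use assms in \<open>simp_all add: frown_reached_def tau_steps_def\<close>)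
qed

lemma smile_reached_tau: "smile_reached w \<Longrightarrow> T w tau v \<Longrightarrow> smile_reached v"
  unfolding smile_reached_def tau_steps_def by (blast intro: rtranclp.rtrancl_into_rtrancl)

lemma not_game_equiv_if_smile_reached:
  assumes "smile_reached w"
  shows "\<not> game_equiv T tau E s' w"
proof
  assume "game_equiv T tau E s' w"
  moreover obtain t1 t2 where "tau_steps T tau t t1" "x = Mb \<longrightarrow> game_equiv T tau E s t1"
    "T t1 a t2" "y = Mb \<longrightarrow> game_equiv T tau E s' t2" "tau_steps T tau t2 w"
    using assms unfolding smile_reached_def by blast
  ultimately have "can_match x y s t a s'" using equiv by (intro can_matchI)
  then show False using no_match by contradiction
qed

lemma not_game_equiv_if_frown_reached_tau:
  assumes reached: "frown_reached w" and tau: "a = tau"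
  shows "\<not> game_equiv T tau E s' w"
proof
  assume equiv': "game_equiv T tau E s' w"
  have "(\<lambda>u v. T u tau v \<and> (x = Mb \<longrightarrow> game_equiv T tau E s u))\<^sup>*\<^sup>* t w"
    using reached unfolding frown_reached_def by simp
  then consider "w = t"
    | w0 where "(\<lambda>u v. T u tau v \<and> (x = Mb \<longrightarrow> game_equiv T tau E s u))\<^sup>*\<^sup>* t w0"
        and "T w0 tau w" and "x = Mb \<longrightarrow> game_equiv T tau E s w0"
    by (cases rule: rtranclp.cases) auto
  then show False
  proof cases
    case 1
    then have "can_match x y s t a s'" using equiv' tau by (simp add: can_match_def)
    then show False using no_match by contradiction
  next
    case 2
    then have "frown_reached w0" unfolding frown_reached_def by simp
    then have "smile_reached w"
      by (rule smile_reached_from_frown) (use 2 equiv' tau in simp_all)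
    then show False using equiv' not_game_equiv_if_smile_reached by blast
  qed
qed

lemma pending_after_Frown_move:
  assumes reached: "frown_reached w"
    and move: "gmove T tau E (Conf Dup (s, v) (Some (a, s')) (Some (w, Frown)) Star) c'"
    and win: "dup_wins c'"
  shows "pending c'"
  using gmove_DupD[OF move]
proof (elim disjE exE conjE)
  assume "a = tau" and "c' = Conf Spo (s', w) None None Check"
  then show ?thesis
    using reached win not_game_equiv_if_frown_reached_tau game_equiv_iff_dup_wins_Check by blast
next
  fix v' assume a_step: "T w a v'"
    and c': "c' = Conf Spo (s', v') (Some (a, s')) (Some (v', Smile)) Star"
  have "y = Mb \<longrightarrow> game_equiv T tau E s' v'"
    using Smile_in_E win c' game_equiv_if_answered by auto
  with reached a_step have "smile_reached v'" by (rule smile_reached_from_frown)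
  then show ?thesis unfolding pending_def c' by blast
next
  fix v' assume "T w a v'" and "c' = Conf Spo (s', v') None None Check"
  moreover from this have "game_equiv T tau E s' v'"
    using win game_equiv_iff_dup_wins_Check by simp
  ultimately show ?thesis
    using reached smile_reached_from_frown not_game_equiv_if_smile_reached by blast
next
  fix v' assume "T w a v'" and "Smile \<in> E"
    and c': "c' = Conf Spo (s, v) (Some (a, s')) (Some (v', Smile)) Star"
  then have "smile_reached v'"
    by (intro smile_reached_from_frown[OF reached]) (use Smile_in_E in simp_all)
  then show ?thesis unfolding pending_def c' by blast
next
  fix v' assume tau_step: "T w tau v'"
    and c': "c' = Conf Spo (s, v') (Some (a, s')) (Some (v', Frown)) Star"
  have "game_equiv T tau E s v'" using win c' dup_wins_challenge_iff[OF step] by simp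
  then have "frown_reached v'" using reached tau_step by (auto intro: frown_reached_tau)
  then show ?thesis unfolding pending_def c' by blast
next
  fix v' assume tau_step: "T w tau v'" and "Frown \<in> E"
    and c': "c' = Conf Spo (s, v) (Some (a, s')) (Some (v', Frown)) Star"
  then have "frown_reached v'"
    by (intro frown_reached_tau[OF reached tau_step]) (use Frown_in_E in simp)
  then show ?thesis unfolding pending_def c' by blast
qed simp

lemma pending_after_Smile_move:
  assumes reached: "smile_reached w"
    and move: "gmove T tau E (Conf Dup (u, v) (Some (a, s')) (Some (w, Smile)) Star) c'"
    and win: "dup_wins c'"
  shows "pending c'"
  using gmove_DupD[OF move]
proof (elim disjE exE conjE)
  assume "c' = Conf Spo (s', w) None None Check"
  then show ?thesis
    using reached win not_game_equiv_if_smile_reached game_equiv_iff_dup_wins_Check by blast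
next
  fix v' assume "T w tau v'"
    and c': "c' = Conf Spo (u, v') (Some (a, s')) (Some (v', Smile)) Star"
  then have "smile_reached v'" using reached by (blast intro: smile_reached_tau)
  then show ?thesis unfolding pending_def c' by blast
next
  fix v' assume "T w tau v'" and "c' = Conf Spo (s', v') None None Check"
  then show ?thesis
    using reached win smile_reached_tau not_game_equiv_if_smile_reached
      game_equiv_iff_dup_wins_Check by blast
next
  fix v' assume "T w tau v'"
    and c': "c' = Conf Spo (u, v) (Some (a, s')) (Some (v', Smile)) Star"
  then have "smile_reached v'" using reached by (blast intro: smile_reached_tau)
  then show ?thesis unfolding pending_def c' by blast
qed simp_all

lemma pending_after_Dup_move:
  assumes "pending c" and "owner_of c = Dup" and "gmove T tau E c c'" and "dup_wins c'"
  shows "pending c'"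
  using assms pending_after_Frown_move pending_after_Smile_move unfolding pending_def[of c] by auto

lemma not_dup_wins_pending:
  assumes "pending c"
  shows "\<not> dup_wins c"
proof (rule not_dup_wins_if_trapped[where P = pending])
  fix c assume pend: "pending c" and "owner_of c = Spo"
  then obtain u v ch m where c: "c = Conf Spo (u, v) (Some ch) m Star"
    unfolding pending_def by auto
  have "gmove T tau E c (Conf Dup (u, v) (Some ch) m Star)" unfolding c by (rule S1) simp
  moreover have "pending (Conf Dup (u, v) (Some ch) m Star)"
    using pend unfolding c pending_def by auto
  ultimately show "\<exists>c'. gmove T tau E c c' \<and> pending c'" by blast
next
  show "pending c'" if "pending c" "owner_of c = Dup" "gmove T tau E c c'" "dup_wins c'" for c c'
    using that by (rule pending_after_Dup_move)
next
  show "reward_of c = Star" if "pending c" for c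
    using that unfolding pending_def by auto
qed (fact assms)

lemma unmatched_step_absurd: False
proof -
  have "gmove T tau E (Conf Spo (s, t) None None Star)
      (Conf Dup (s, t) (Some (a, s')) (Some (t, Frown)) Star)"
    using step by (rule S2a)
  then have "dup_wins (Conf Dup (s, t) (Some (a, s')) (Some (t, Frown)) Star)"
    using equiv game_equiv_iff_dup_wins dup_wins_Spo_move by auto
  moreover have "pending (Conf Dup (s, t) (Some (a, s')) (Some (t, Frown)) Star)"
    unfolding pending_def using frown_reached_start by blast
  ultimately show False using not_dup_wins_pending by blast
qed

end

lemma game_equiv_can_match:
  assumes "Frown \<in> E \<longleftrightarrow> x = Mo" and "Smile \<in> E \<longleftrightarrow> y = Mo"
    and "game_equiv T tau E s t" and "T s a s'"
  shows "can_match x y s t a s'"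
  using unmatched_step_absurd[OF assms] by blast

end

theorem lemma5p10:
  fixes T :: "'s \<Rightarrow> 'a \<Rightarrow> 's \<Rightarrow> bool" and tau :: 'a and x y :: mode
  shows "generic_bisim T tau x y (game_equiv T tau (Eset x y))"
  unfolding generic_bisim_def can_match_def[symmetric]
proof (intro conjI allI impI)
  fix s t assume "game_equiv T tau (Eset x y) s t"
  then show "game_equiv T tau (Eset x y) t s" by (rule game_equiv_sym)
next
  fix s t a s' assume "game_equiv T tau (Eset x y) s t \<and> T s a s'"
  then show "can_match T tau (Eset x y) x y s t a s'"
    by (intro game_equiv_can_match) (auto simp: Eset_def)
qed

end
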